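(* Let $G_1,G_2$ be finite connected biregular bipartite graphs, each with an ordered bipartition (left part, right part). Then $\lambda_2(G_1\circledast G_2)=\max\{\lambda_2(G_1),\lambda_2(G_2)\}$.
   Context: A bipartite graph with ordered parts $(L,R)$ is biregular if all vertices of $L$ have a common degree and all vertices of $R$ have a common degree. For 2-partite graphs $G_1=((V_1^1,V_1^2),E_1)$ and $G_2=((V_2^1,V_2^2),E_2)$, the partite product $G_1\circledast G_2$ has ordered parts $(V_1^1\times V_2^1,\ V_1^2\times V_2^2)$, and $(a,b)\in V_1^1\times V_2^1$ is adjacent to $(c,d)\in V_1^2\times V_2^2$ iff $\{a,c\}\in E_1$ and $\{b,d\}\in E_2$. For a graph $G$, $T_G(v,u)=1/\deg(v)$ if $\{u,v\}$ is an edge and $0$ otherwise (transition matrix for the uniform distribution on edges), and $\lambda_2(G)$ is the second largest eigenvalue of $T_G$, counted with multiplicity. *)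

theory Defs
  imports "HOL-Computational_Algebra.Polynomial" "HOL-Combinatorics.Permutations"
          "HOL-Library.Multiset"
begin

record ('a, 'b) bigraph =
  lpart :: "'a set"
  rpart :: "'b set"
  edge  :: "'a \<Rightarrow> 'b \<Rightarrow> bool"

definition verts :: "('a, 'b) bigraph \<Rightarrow> ('a + 'b) set" where
  "verts G = lpart G <+> rpart G"

fun adj :: "('a, 'b) bigraph \<Rightarrow> 'a + 'b \<Rightarrow> 'a + 'b \<Rightarrow> bool" where
  "adj G (Inl a) (Inr b) = edge G a b"
| "adj G (Inr b) (Inl a) = edge G a b"
| "adj G _ _ = False"

definition wf_bigraph :: "('a, 'b) bigraph \<Rightarrow> bool" where
  "wf_bigraph G \<longleftrightarrow> finite (lpart G) \<and> finite (rpart G) \<and>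
     (\<forall>a b. edge G a b \<longrightarrow> a \<in> lpart G \<and> b \<in> rpart G)"

definition degree :: "('a, 'b) bigraph \<Rightarrow> 'a + 'b \<Rightarrow> nat" where
  "degree G v = card {u \<in> verts G. adj G v u}"

definition biregular :: "('a, 'b) bigraph \<Rightarrow> bool" where
  "biregular G \<longleftrightarrow>
     (\<exists>d. \<forall>a \<in> lpart G. degree G (Inl a) = d) \<and>
     (\<exists>d. \<forall>b \<in> rpart G. degree G (Inr b) = d)"

definition connected_bigraph :: "('a, 'b) bigraph \<Rightarrow> bool" where
  "connected_bigraph G \<longleftrightarrow>
     (\<forall>u \<in> verts G. \<forall>v \<in> verts G.
        (\<lambda>x y. x \<in> verts G \<and> y \<in> verts G \<and> adj G x y)\<^sup>*\<^sup>* u v)"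

definition partite_product ::
  "('a, 'b) bigraph \<Rightarrow> ('c, 'd) bigraph \<Rightarrow> ('a \<times> 'c, 'b \<times> 'd) bigraph" where
  "partite_product G1 G2 =
     \<lparr> lpart = lpart G1 \<times> lpart G2, rpart = rpart G1 \<times> rpart G2,
       edge = (\<lambda>(a, b) (c, d). edge G1 a c \<and> edge G2 b d) \<rparr>"

definition transition :: "('a, 'b) bigraph \<Rightarrow> 'a + 'b \<Rightarrow> 'a + 'b \<Rightarrow> real" where
  "transition G v u = (if adj G v u then 1 / real (degree G v) else 0)"

definition det_on :: "'i set \<Rightarrow> ('i \<Rightarrow> 'i \<Rightarrow> 'r::comm_ring_1) \<Rightarrow> 'r" where
  "det_on V A = (\<Sum>p | p permutes V. of_int (sign p) * (\<Prod>i\<in>V. A i (p i)))"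

definition charpoly_on :: "'i set \<Rightarrow> ('i \<Rightarrow> 'i \<Rightarrow> real) \<Rightarrow> real poly" where
  "charpoly_on V M = det_on V (\<lambda>i j. (if i = j then [:0, 1:] else 0) - [:M i j:])"

definition eigenvalues_desc :: "'i set \<Rightarrow> ('i \<Rightarrow> 'i \<Rightarrow> real) \<Rightarrow> real list" where
  "eigenvalues_desc V M = rev (sorted_list_of_multiset (proots (charpoly_on V M)))"

definition lambda2 :: "('a, 'b) bigraph \<Rightarrow> real" where
  "lambda2 G = eigenvalues_desc (verts G) (transition G) ! 1"

end

theory Submission
  imports Defs "Jordan_Normal_Form.Schur_Decomposition"
begin

text \<open>
  List the left part before the right one. Then the transition matrix of a bipartite graph is a
  block matrix \<open>T = [[0, P], [Q, 0]]\<close>, and a Schur complement computation gives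
  \<open>x ^ card L * \<chi>\<^sub>T(x) = x ^ card R * \<chi>\<^sub>W(x\<^sup>2)\<close> for the two-step walk \<open>W = P Q\<close> on the
  left part. When the left part is regular, \<open>W = B B\<^sup>T\<close> is a row-stochastic Gram matrix, so
  its eigenvalues lie in \<open>[0, 1]\<close> and include 1. Hence the spectrum of \<open>T\<close> consists of the
  numbers \<open>\<plusminus>sqrt \<mu>\<close> for the eigenvalues \<open>\<mu>\<close> of \<open>W\<close>, completed by zeros, and \<open>\<lambda>\<^sub>2(G)\<close> is the
  square root of the largest eigenvalue of \<open>W\<close> that is left after removing one copy of 1 (or 0
  if there is none), except for a single edge, whose spectrum is \<open>{1, -1}\<close>.

  The two-step walk of \<open>G\<^sub>1 \<circledast> G\<^sub>2\<close> is the Kronecker product of those of \<open>G\<^sub>1\<close> and \<open>G\<^sub>2\<close>, so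
  its eigenvalues are the products \<open>\<mu> \<nu>\<close>. As they all lie in \<open>[0, 1]\<close>, removing the product
  \<open>1 \<cdot> 1\<close> leaves the largest eigenvalue \<open>max \<mu>\<^sub>2 \<nu>\<^sub>2\<close>.
\<close>

section \<open>Determinants over finite index sets\<close>

definition conj_perm :: "('a \<Rightarrow> 'b) \<Rightarrow> ('b \<Rightarrow> 'a) \<Rightarrow> 'b set \<Rightarrow> ('a \<Rightarrow> 'a) \<Rightarrow> 'b \<Rightarrow> 'b" where
  "conj_perm g g' B p = (\<lambda>y. if y \<in> B then g (p (g' y)) else y)"

lemma conj_perm_permutes:
  assumes "finite A" and "bij_betw g A B" and "\<And>x. x \<in> A \<Longrightarrow> g' (g x) = x"
    and "p permutes A"
  shows "conj_perm g g' B p permutes B" and "sign (conj_perm g g' B p) = sign p"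
proof -
  interpret permutes_bij_finite p A B g g' "conj_perm g g' B p"
    by unfold_locales (use assms in \<open>auto simp: conj_perm_def\<close>)
  show "conj_perm g g' B p permutes B" and "sign (conj_perm g g' B p) = sign p"
    by (fact permutes_p' sign_p')+
qed

lemma det_on_reindex:
  assumes "finite A" and g: "bij_betw g A B"
  shows "det_on A (\<lambda>i j. M (g i) (g j)) = det_on B M"
proof -
  define g' where "g' = inv_into A g"
  have g'g: "g' (g x) = x" if "x \<in> A" for x
    using bij_betw_inv_into_left[OF g that] by (simp add: g'_def)
  have gg': "g (g' y) = y" if "y \<in> B" for y
    using bij_betw_inv_into_right[OF g that] by (simp add: g'_def)
  have "finite B" and g': "bij_betw g' B A"
    using assms bij_betw_finite bij_betw_inv_into by (auto simp: g'_def)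
  have to_B: "conj_perm g g' B p permutes B \<and> sign (conj_perm g g' B p) = sign p"
    if "p permutes A" for p
    using conj_perm_permutes[OF \<open>finite A\<close> g _ that] g'g by blast
  show ?thesis
    unfolding det_on_def
  proof (rule sum.reindex_bij_witness[where i = "conj_perm g' g A" and j = "conj_perm g g' B"],
      goal_cases)
    case (1 p)
    then show ?case using permutes_in_image[of p A] permutes_not_in[of p A] g'g bij_betwE[OF g]
      by (auto simp: conj_perm_def fun_eq_iff)
  next
    case (2 p)
    then show ?case using to_B by simp
  next
    case (3 q)
    then show ?case using permutes_in_image[of q B] permutes_not_in[of q B] gg' bij_betwE[OF g']
      by (auto simp: conj_perm_def fun_eq_iff)
  next
    case (4 q)
    then show ?case using conj_perm_permutes(1)[OF \<open>finite B\<close> g', of g q] gg' by auto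
  next
    case (5 p)
    then have p: "p permutes A" by simp
    have "(\<Prod>y\<in>B. M y (conj_perm g g' B p y)) = (\<Prod>x\<in>A. M (g x) (conj_perm g g' B p (g x)))"
      by (rule prod.reindex_bij_betw[OF g, symmetric])
    also have "\<dots> = (\<Prod>x\<in>A. M (g x) (g (p x)))"
      using g'g bij_betwE[OF g] by (intro prod.cong) (auto simp: conj_perm_def)
    finally show ?case using to_B[OF p] by simp
  qed
qed

lemma det_on_atLeastLessThan: "det_on {0..<n} M = det (mat n n (\<lambda>(i, j). M i j))"
  unfolding det_on_def by (subst det_def'[OF mat_carrier]) (auto intro!: sum.cong prod.cong
      simp: permutes_in_image)

lemma charpoly_on_eq_char_poly:
  assumes "bij_betw g {0..<n} V"
  shows "charpoly_on V M = char_poly (mat n n (\<lambda>(i, j). M (g i) (g j)))"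
proof -
  have "charpoly_on V M =
      det_on {0..<n} (\<lambda>i j. (if g i = g j then [:0, 1:] else 0) - [:M (g i) (g j):])"
    unfolding charpoly_on_def by (rule det_on_reindex[OF _ assms, symmetric]) simp
  also have "\<dots> = det_on {0..<n} (\<lambda>i j. (if i = j then [:0, 1:] else 0) - [:M (g i) (g j):])"
    using bij_betw_imp_inj_on[OF assms] unfolding det_on_def
    by (intro sum.cong prod.cong refl) (auto simp: permutes_in_image inj_on_eq_iff)
  also have "\<dots> = char_poly (mat n n (\<lambda>(i, j). M (g i) (g j)))"
    unfolding det_on_atLeastLessThan char_poly_def
    by (intro arg_cong[where f = det] eq_matI) (auto simp: char_poly_matrix_def)
  finally show ?thesis .
qed

lemma monic_charpoly_on:
  assumes "finite V"
  shows "Polynomial.degree (charpoly_on V M) = card V" "lead_coeff (charpoly_on V M) = 1"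
proof -
  obtain g where "bij_betw g {0..<card V} V"
    using ex_bij_betw_nat_finite[OF assms] by blast
  then show "Polynomial.degree (charpoly_on V M) = card V" "lead_coeff (charpoly_on V M) = 1"
    using degree_monic_char_poly[OF mat_carrier, of "card V" "\<lambda>(i, j). M (g i) (g j)"]
    by (simp_all add: charpoly_on_eq_char_poly)
qed

section \<open>Kronecker products\<close>

lemma mult_add_less_mult: "i < n \<Longrightarrow> j < m \<Longrightarrow> i * m + j < n * (m::nat)"
proof -
  assume "i < n" "j < m"
  then have "i * m + j < Suc i * m" by simp
  also have "\<dots> \<le> n * m" using \<open>i < n\<close> by (intro mult_le_mono1) simp
  finally show ?thesis .
qed

lemma div_mod_less_mult: "k < n * m \<Longrightarrow> k div m < n \<and> k mod m < (m::nat)"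
  by (metis bot_nat_0.extremum_strict gr0I less_mult_imp_div_less mod_less_divisor mult_not_zero)

lemma bij_betw_div_mod:
  "bij_betw (\<lambda>k. (k div m, k mod m)) {0..<n * m} ({0..<n} \<times> {0..<(m::nat)})"
proof (rule bij_betw_byWitness[where f' = "\<lambda>(i, j). i * m + j"])
  show "(\<lambda>k. (k div m, k mod m)) ` {0..<n * m} \<subseteq> {0..<n} \<times> {0..<m}"
    using div_mod_less_mult by auto
  show "(\<lambda>(i, j). i * m + j) ` ({0..<n} \<times> {0..<m}) \<subseteq> {0..<n * m}"
    using mult_add_less_mult by auto
qed auto

lemma sum_atLeastLessThan_mult:
  "(\<Sum>k\<in>{0..<n * m}. f k) = (\<Sum>i\<in>{0..<n}. \<Sum>j\<in>{0..<(m::nat)}. f (i * m + j))"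
proof -
  have "(\<Sum>k\<in>{0..<n * m}. f k) = (\<Sum>(i, j)\<in>{0..<n} \<times> {0..<m}. f (i * m + j))"
    by (simp add: sum.reindex_bij_betw[OF bij_betw_div_mod, symmetric,
          where g = "\<lambda>(i, j). f (i * m + j)"])
  then show ?thesis by (simp add: sum.cartesian_product)
qed

lemma map_upt_mult:
  "map f [0..<n * m] = concat (map (\<lambda>i. map (\<lambda>j. f (i * m + j)) [0..<m]) [0..<n])"
proof (induction n)
  case (Suc n)
  have "[0..<Suc n * m] = [0..<n * m] @ map (\<lambda>j. n * m + j) [0..<m]"
    using upt_add_eq_append[of 0 "n * m" m] map_add_upt[of "n * m" m] by (simp add: ac_simps)
  then show ?case using Suc.IH by simp
qed simp

definition kronecker_product :: "'a::times mat \<Rightarrow> 'a mat \<Rightarrow> 'a mat" where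
  "kronecker_product A B = mat (dim_row A * dim_row B) (dim_col A * dim_col B)
     (\<lambda>(i, j). A $$ (i div dim_row B, j div dim_col B) * B $$ (i mod dim_row B, j mod dim_col B))"

lemma dim_kronecker_product [simp]:
  "dim_row (kronecker_product A B) = dim_row A * dim_row B"
  "dim_col (kronecker_product A B) = dim_col A * dim_col B"
  by (simp_all add: kronecker_product_def)

lemma kronecker_product_carrier_mat:
  "A \<in> carrier_mat n k \<Longrightarrow> B \<in> carrier_mat m p \<Longrightarrow>
   kronecker_product A B \<in> carrier_mat (n * m) (k * p)"
  by (intro carrier_matI) auto

lemma index_kronecker_product [simp]:
  "i < dim_row A * dim_row B \<Longrightarrow> j < dim_col A * dim_col B \<Longrightarrow>
   kronecker_product A B $$ (i, j) =
     A $$ (i div dim_row B, j div dim_col B) * B $$ (i mod dim_row B, j mod dim_col B)"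
  by (simp add: kronecker_product_def)

lemma kronecker_product_mult:
  fixes A :: "'a::comm_semiring_0 mat"
  assumes A: "A \<in> carrier_mat n k" and B: "B \<in> carrier_mat m p"
    and C: "C \<in> carrier_mat k n'" and D: "D \<in> carrier_mat p m'"
  shows "kronecker_product A B * kronecker_product C D = kronecker_product (A * C) (B * D)"
proof (rule eq_matI)
  fix i j assume "i < dim_row (kronecker_product (A * C) (B * D))"
    and "j < dim_col (kronecker_product (A * C) (B * D))"
  then have i: "i < n * m" and j: "j < n' * m'" using A B C D by simp_all
  have "(kronecker_product A B * kronecker_product C D) $$ (i, j) =
      (\<Sum>l\<in>{0..<k * p}. kronecker_product A B $$ (i, l) * kronecker_product C D $$ (l, j))"
    using A B C D i j by (simp add: scalar_prod_def)
  also have "\<dots> = (\<Sum>k1\<in>{0..<k}. \<Sum>k2\<in>{0..<p}. A $$ (i div m, k1) * B $$ (i mod m, k2) *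
         (C $$ (k1, j div m') * D $$ (k2, j mod m')))"
    unfolding sum_atLeastLessThan_mult using A B C D i j
    by (intro sum.cong refl) (simp add: mult_add_less_mult div_mod_less_mult mult_ac)
  also have "\<dots> = (\<Sum>k1\<in>{0..<k}. A $$ (i div m, k1) * C $$ (k1, j div m')) *
      (\<Sum>k2\<in>{0..<p}. B $$ (i mod m, k2) * D $$ (k2, j mod m'))"
    by (simp add: sum_product mult_ac)
  also have "\<dots> = (A * C) $$ (i div m, j div m') * (B * D) $$ (i mod m, j mod m')"
    using A B C D div_mod_less_mult[OF i] div_mod_less_mult[OF j] by (simp add: scalar_prod_def)
  finally show "(kronecker_product A B * kronecker_product C D) $$ (i, j) =
      kronecker_product (A * C) (B * D) $$ (i, j)"
    using A B C D i j by simp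
qed simp_all

lemma kronecker_product_one: "kronecker_product (1\<^sub>m n) (1\<^sub>m m) = (1\<^sub>m (n * m) :: 'a::semiring_1 mat)"
proof (rule eq_matI)
  fix i j assume "i < dim_row (1\<^sub>m (n * m) :: 'a mat)" "j < dim_col (1\<^sub>m (n * m) :: 'a mat)"
  then have i: "i < n * m" and j: "j < n * m" by simp_all
  have "i div m = j div m \<and> i mod m = j mod m \<longleftrightarrow> i = j"
    by (metis div_mult_mod_eq)
  then show "kronecker_product (1\<^sub>m n) (1\<^sub>m m) $$ (i, j) = (1\<^sub>m (n * m) :: 'a mat) $$ (i, j)"
    using div_mod_less_mult[OF i] div_mod_less_mult[OF j] i j by auto
qed simp_all

lemma similar_mat_kronecker_product:
  fixes A :: "'a::comm_semiring_1 mat"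
  assumes "similar_mat A A'" and "similar_mat B B'"
  shows "similar_mat (kronecker_product A B) (kronecker_product A' B')"
proof -
  obtain n P Q where A: "A \<in> carrier_mat n n" "A' \<in> carrier_mat n n" "P \<in> carrier_mat n n"
    "Q \<in> carrier_mat n n" "P * Q = 1\<^sub>m n" "Q * P = 1\<^sub>m n" "A = P * A' * Q"
    using similar_matD[OF assms(1)] by auto
  obtain m P' Q' where B: "B \<in> carrier_mat m m" "B' \<in> carrier_mat m m" "P' \<in> carrier_mat m m"
    "Q' \<in> carrier_mat m m" "P' * Q' = 1\<^sub>m m" "Q' * P' = 1\<^sub>m m" "B = P' * B' * Q'"
    using similar_matD[OF assms(2)] by auto
  show ?thesis
  proof (rule similar_matI[where P = "kronecker_product P P'" and Q = "kronecker_product Q Q'"])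
    show "{kronecker_product A B, kronecker_product A' B', kronecker_product P P',
        kronecker_product Q Q'} \<subseteq> carrier_mat (n * m) (n * m)"
      using A B by (auto intro: kronecker_product_carrier_mat)
    show "kronecker_product P P' * kronecker_product Q Q' = 1\<^sub>m (n * m)"
      "kronecker_product Q Q' * kronecker_product P P' = 1\<^sub>m (n * m)"
      using A B by (simp_all add: kronecker_product_mult kronecker_product_one)
    show "kronecker_product A B =
        kronecker_product P P' * kronecker_product A' B' * kronecker_product Q Q'"
      using A B by (simp add: kronecker_product_mult[of P n n P' m m A' n B' m]
          kronecker_product_mult[of "P * A'" n n "P' * B'" m m Q n Q' m])
  qed
qed

lemma upper_triangular_kronecker_product:
  fixes A :: "'a::semiring_0 mat"
  assumes A: "A \<in> carrier_mat n n" and B: "B \<in> carrier_mat m m"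
    and uA: "upper_triangular A" and uB: "upper_triangular B"
  shows "upper_triangular (kronecker_product A B)"
proof (rule upper_triangularI)
  fix i j assume "j < i" and "i < dim_row (kronecker_product A B)"
  then have i: "i < n * m" and j: "j < n * m" using A B by simp_all
  note bounds = div_mod_less_mult[OF i] div_mod_less_mult[OF j]
  consider "j div m < i div m" | "j div m = i div m" "j mod m < i mod m"
    using \<open>j < i\<close> by (metis diff_less_mono div_le_mono div_times_less_eq_dividend
        le_eq_less_or_eq modulo_nat_def)
  then show "kronecker_product A B $$ (i, j) = 0"
  proof cases
    case 1
    then have "A $$ (i div m, j div m) = 0" using upper_triangularD[OF uA] A bounds by simp
    then show ?thesis using A B i j by simp
  next
    case 2
    then have "B $$ (i mod m, j mod m) = 0" using upper_triangularD[OF uB] B bounds by simp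
    then show ?thesis using A B i j by simp
  qed
qed

lemma diag_mat_kronecker_product:
  assumes "A \<in> carrier_mat n n" and "B \<in> carrier_mat m m"
  shows "diag_mat (kronecker_product A B) = [a * b. a \<leftarrow> diag_mat A, b \<leftarrow> diag_mat B]"
proof -
  have "diag_mat (kronecker_product A B) =
      concat (map (\<lambda>i. map (\<lambda>j. kronecker_product A B $$ (i * m + j, i * m + j)) [0..<m]) [0..<n])"
    using assms by (simp add: diag_mat_def map_upt_mult)
  also have "\<dots> = concat (map (\<lambda>i. map (\<lambda>j. A $$ (i, i) * B $$ (j, j)) [0..<m]) [0..<n])"
    using assms by (intro arg_cong[where f = concat] map_cong refl) (simp add: mult_add_less_mult)
  finally show ?thesis
    using assms by (simp add: diag_mat_def map_concat comp_def)
qed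

lemma upper_triangular_similar:
  fixes A :: "'a::conjugatable_ordered_field mat"
  assumes "A \<in> carrier_mat n n" and "char_poly A = (\<Prod>a\<leftarrow>es. [:-a, 1:])"
  obtains T where "T \<in> carrier_mat n n" "upper_triangular T" "diag_mat T = es" "similar_mat A T"
proof -
  obtain T P Q where "schur_decomposition A es = (T, P, Q)"
    by (cases "schur_decomposition A es")
  from schur_decomposition[OF assms this]
  have sim: "similar_mat_wit A T P Q" and "upper_triangular T" "diag_mat T = es" by auto
  moreover have "T \<in> carrier_mat n n"
    using similar_mat_witD2[OF assms(1) sim] by simp
  ultimately show ?thesis
    using that by (auto simp: similar_mat_def)
qed

lemma char_poly_kronecker_product:
  fixes A B :: "'a::conjugatable_ordered_field mat"
  assumes A: "A \<in> carrier_mat n n" and B: "B \<in> carrier_mat m m"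
    and "char_poly A = (\<Prod>a\<leftarrow>as. [:-a, 1:])" and "char_poly B = (\<Prod>b\<leftarrow>bs. [:-b, 1:])"
  shows "char_poly (kronecker_product A B) = (\<Prod>c\<leftarrow>[a * b. a \<leftarrow> as, b \<leftarrow> bs]. [:-c, 1:])"
proof -
  obtain TA where TA: "TA \<in> carrier_mat n n" "upper_triangular TA" "diag_mat TA = as" "similar_mat A TA"
    using upper_triangular_similar[OF A assms(3)] .
  obtain TB where TB: "TB \<in> carrier_mat m m" "upper_triangular TB" "diag_mat TB = bs" "similar_mat B TB"
    using upper_triangular_similar[OF B assms(4)] .
  have "char_poly (kronecker_product A B) = char_poly (kronecker_product TA TB)"
    by (rule char_poly_similar[OF similar_mat_kronecker_product[OF TA(4) TB(4)]])
  also have "\<dots> = (\<Prod>c\<leftarrow>diag_mat (kronecker_product TA TB). [:-c, 1:])"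
    by (rule char_poly_upper_triangular[OF kronecker_product_carrier_mat[OF TA(1) TB(1)]
          upper_triangular_kronecker_product[OF TA(1) TB(1) TA(2) TB(2)]])
  finally show ?thesis
    using diag_mat_kronecker_product[OF TA(1) TB(1)] TA(3) TB(3) by simp
qed

definition times_mset :: "'a::times multiset \<Rightarrow> 'a multiset \<Rightarrow> 'a multiset" where
  "times_mset M N = (\<Sum>a\<in>#M. image_mset ((*) a) N)"

lemma mset_times_list: "mset [a * b. a \<leftarrow> xs, b \<leftarrow> ys] = times_mset (mset xs) (mset ys)"
  by (induction xs) (simp_all add: times_mset_def)

lemma set_mset_times_mset: "set_mset (times_mset M N) = {a * b |a b. a \<in># M \<and> b \<in># N}"
  by (auto simp: times_mset_def)

lemma one_in_times_mset: "1 \<in># M \<Longrightarrow> 1 \<in># N \<Longrightarrow> (1::'a::monoid_mult) \<in># times_mset M N"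
  by (force simp: set_mset_times_mset)

lemma times_mset_add_mset_one:
  "times_mset (add_mset 1 M) (add_mset (1::'a::monoid_mult) N) = add_mset 1 (N + M + times_mset M N)"
  by (induction M) (simp_all add: times_mset_def multiset.map_ident_strong)

lemma times_mset_unit_interval:
  assumes "\<forall>\<mu>\<in>#M. 0 \<le> \<mu> \<and> \<mu> \<le> 1" and "\<forall>\<nu>\<in>#N. 0 \<le> \<nu> \<and> \<nu> \<le> (1::real)"
  shows "\<forall>x\<in>#times_mset M N. 0 \<le> x \<and> x \<le> 1"
  using assms by (auto simp: set_mset_times_mset intro: mult_le_one)

lemma charpoly_on_tensor:
  assumes "finite A" and "finite B"
    and "charpoly_on A M = (\<Prod>a\<in>#SA. [:-a, 1:])" and "charpoly_on B N = (\<Prod>b\<in>#SB. [:-b, 1:])"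
  shows "charpoly_on (A \<times> B) (\<lambda>(a, b) (a', b'). M a a' * N b b') =
    (\<Prod>c\<in>#times_mset SA SB. [:-c, 1:])"
proof -
  obtain as bs where SA: "SA = mset as" and SB: "SB = mset bs"
    using ex_mset by metis
  define n m where "n = card A" and "m = card B"
  obtain f g where f: "bij_betw f {0..<n} A" and g: "bij_betw g {0..<m} B"
    unfolding n_def m_def using ex_bij_betw_nat_finite assms(1,2) by metis
  define h where "h = (\<lambda>k. (f (k div m), g (k mod m)))"
  have h: "bij_betw h {0..<n * m} (A \<times> B)"
    using bij_betw_trans[OF bij_betw_div_mod bij_betw_map_prod[OF f g]] by (simp add: h_def comp_def)
  have "mat (n * m) (n * m) (\<lambda>(i, j). (\<lambda>(a, b) (a', b'). M a a' * N b b') (h i) (h j)) =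
      kronecker_product (mat n n (\<lambda>(i, j). M (f i) (f j))) (mat m m (\<lambda>(i, j). N (g i) (g j)))"
    by (rule eq_matI) (auto simp: h_def div_mod_less_mult)
  then have "charpoly_on (A \<times> B) (\<lambda>(a, b) (a', b'). M a a' * N b b') =
      char_poly (kronecker_product (mat n n (\<lambda>(i, j). M (f i) (f j))) (mat m m (\<lambda>(i, j). N (g i) (g j))))"
    by (simp add: charpoly_on_eq_char_poly[OF h])
  also have "\<dots> = (\<Prod>c\<leftarrow>[a * b. a \<leftarrow> as, b \<leftarrow> bs]. [:-c, 1:])"
    using assms(3,4) by (intro char_poly_kronecker_product[OF mat_carrier mat_carrier])
      (simp_all add: charpoly_on_eq_char_poly[OF f, symmetric] charpoly_on_eq_char_poly[OF g, symmetric]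
        SA SB prod_mset_prod_list flip: mset_map)
  finally show ?thesis
    by (simp add: SA SB mset_times_list[symmetric] prod_mset_prod_list flip: mset_map)
qed

section \<open>Bipartite block matrices\<close>

lemma smult_one_mult_mat:
  fixes M :: "'a::comm_semiring_1 mat"
  assumes "M \<in> carrier_mat n m"
  shows "(x \<cdot>\<^sub>m 1\<^sub>m n) * M = x \<cdot>\<^sub>m M" and "M * (x \<cdot>\<^sub>m 1\<^sub>m m) = x \<cdot>\<^sub>m M"
  using assms mult_smult_assoc_mat[OF one_carrier_mat assms] mult_smult_distrib[OF assms one_carrier_mat]
  by simp_all

lemma char_poly_bipartite_block:
  fixes P Q :: "'a::idom mat"
  assumes P: "P \<in> carrier_mat l r" and Q: "Q \<in> carrier_mat r l"
  shows "[:0, 1:] ^ l * char_poly (four_block_mat (0\<^sub>m l l) P Q (0\<^sub>m r r)) =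
    [:0, 1:] ^ r * (char_poly (P * Q) \<circ>\<^sub>p [:0, 0, 1:])"
proof -
  define X :: "'a poly" where "X = [:0, 1:]"
  define cP where "cP = map_mat (\<lambda>a. [:a:]) P"
  define nP where "nP = map_mat (\<lambda>a. [:-a:]) P"
  define nQ where "nQ = map_mat (\<lambda>a. [:-a:]) Q"
  define C where "C = four_block_mat (X \<cdot>\<^sub>m 1\<^sub>m l) nP nQ (X \<cdot>\<^sub>m 1\<^sub>m r)"
  \<comment> \<open>\<open>U * C\<close> is block lower triangular with diagonal blocks \<open>X\<^sup>2 I - P Q\<close> and \<open>X\<^sup>2 I\<close>.\<close>
  define U where "U = four_block_mat (X \<cdot>\<^sub>m 1\<^sub>m l) cP (0\<^sub>m r l) (X \<cdot>\<^sub>m 1\<^sub>m r)"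
  have carr: "cP \<in> carrier_mat l r" "nP \<in> carrier_mat l r" "nQ \<in> carrier_mat r l"
    "X \<cdot>\<^sub>m 1\<^sub>m l \<in> carrier_mat l l" "X \<cdot>\<^sub>m 1\<^sub>m r \<in> carrier_mat r r"
    using P Q by (simp_all add: cP_def nP_def nQ_def)
  have square: "comm_ring_hom (\<lambda>p :: 'a poly. p \<circ>\<^sub>p [:0, 0, 1:])"
    by unfold_locales (simp_all add: pcompose_add pcompose_mult)
  have square_X: "(X \<cdot>\<^sub>m 1\<^sub>m k) * (X \<cdot>\<^sub>m 1\<^sub>m k) = (X * X) \<cdot>\<^sub>m 1\<^sub>m k" for k
    by (rule eq_matI) (simp_all add: smult_one_mult_mat)
  have UC: "U * C = four_block_mat (map_mat (\<lambda>p. p \<circ>\<^sub>p [:0, 0, 1:]) (char_poly_matrix (P * Q)))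
      (0\<^sub>m l r) (0\<^sub>m r l * (X \<cdot>\<^sub>m 1\<^sub>m l) + (X \<cdot>\<^sub>m 1\<^sub>m r) * nQ) ((X * X) \<cdot>\<^sub>m 1\<^sub>m r)"
  proof -
    have "(X \<cdot>\<^sub>m 1\<^sub>m l) * (X \<cdot>\<^sub>m 1\<^sub>m l) + cP * nQ =
        map_mat (\<lambda>p. p \<circ>\<^sub>p [:0, 0, 1:]) (char_poly_matrix (P * Q))"
      unfolding square_X using P Q carr
      by (intro eq_matI) (auto simp: char_poly_matrix_def X_def cP_def nQ_def
          scalar_prod_def sum_to_poly pcompose_pCons sum_negf mult.commute)
    moreover have "(X \<cdot>\<^sub>m 1\<^sub>m l) * nP + cP * (X \<cdot>\<^sub>m 1\<^sub>m r) = 0\<^sub>m l r"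
      using P carr by (intro eq_matI) (auto simp: smult_one_mult_mat cP_def nP_def)
    moreover have "0\<^sub>m r l * nP + (X \<cdot>\<^sub>m 1\<^sub>m r) * (X \<cdot>\<^sub>m 1\<^sub>m r) = (X * X) \<cdot>\<^sub>m 1\<^sub>m r"
      using carr by (simp add: square_X)
    ultimately show ?thesis
      unfolding U_def C_def
      by (subst mult_four_block_mat[OF carr(4,1) zero_carrier_mat carr(5,4,2,3,5)]) simp
  qed
  have "char_poly (four_block_mat (0\<^sub>m l l) P Q (0\<^sub>m r r)) = det C"
    unfolding char_poly_def C_def
    by (intro arg_cong[where f = det] eq_matI)
      (use P Q in \<open>auto simp: char_poly_matrix_def X_def nP_def nQ_def\<close>)
  moreover have "det U = X ^ l * X ^ r"
    unfolding U_def
    by (subst det_four_block_mat_lower_left_zero[OF carr(4,1) refl carr(5)]) simp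
  ultimately have "X ^ r * (X ^ l * char_poly (four_block_mat (0\<^sub>m l l) P Q (0\<^sub>m r r))) =
      det U * det C"
    by (simp add: mult_ac)
  also have "\<dots> = det (U * C)"
    unfolding U_def C_def using carr by (intro det_mult[symmetric]) auto
  also have "\<dots> = (char_poly (P * Q) \<circ>\<^sub>p [:0, 0, 1:]) * (X * X) ^ r"
    unfolding UC char_poly_def comm_ring_hom.hom_det[OF square, symmetric]
    by (subst det_four_block_mat_upper_right_zero) (use P Q carr in auto)
  also have "\<dots> = X ^ r * (X ^ r * (char_poly (P * Q) \<circ>\<^sub>p [:0, 0, 1:]))"
    by (simp add: power_mult_distrib mult_ac)
  finally show ?thesis
    by (simp add: X_def)
qed

lemma bij_betw_Plus_enum:
  assumes f: "bij_betw f {0..<l} A" and g: "bij_betw g {0..<(r::nat)} B"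
  shows "bij_betw (\<lambda>i. if i < l then Inl (f i) else Inr (g (i - l))) {0..<l + r} (A <+> B)"
proof (rule bij_betw_imageI)
  have fA: "inj_on f {0..<l}" "f ` {0..<l} = A" and gB: "inj_on g {0..<r}" "g ` {0..<r} = B"
    using f g by (simp_all add: bij_betw_def)
  show "inj_on (\<lambda>i. if i < l then Inl (f i) else Inr (g (i - l))) {0..<l + r}"
  proof (rule inj_onI)
    fix x y assume x: "x \<in> {0..<l + r}" and y: "y \<in> {0..<l + r}"
      and eq: "(if x < l then Inl (f x) else Inr (g (x - l))) =
        (if y < l then Inl (f y) else Inr (g (y - l)))"
    show "x = y"
    proof (cases "x < l \<and> y < l")
      case True
      then show ?thesis using eq inj_onD[OF fA(1), of x y] by auto
    next
      case False
      then have "\<not> x < l" "\<not> y < l" using eq by (auto split: if_splits)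
      moreover have "x - l < r" "y - l < r" using x y calculation by auto
      ultimately show ?thesis using eq inj_onD[OF gB(1), of "x - l" "y - l"] by auto
    qed
  qed
  have "Inr (g j) \<in> (\<lambda>i. if i < l then Inl (f i) else Inr (g (i - l))) ` {0..<l + r}" if "j < r" for j
    using that by (intro image_eqI[where x = "l + j"]) auto
  then show "(\<lambda>i. if i < l then Inl (f i) else Inr (g (i - l))) ` {0..<l + r} = A <+> B"
    using fA(2) gB(2) by (force simp: Plus_def)
qed

lemma charpoly_on_Plus_bipartite:
  assumes "finite A" and "finite B"
    and "\<And>a a'. M (Inl a) (Inl a') = 0" and "\<And>b b'. M (Inr b) (Inr b') = 0"
  shows "[:0, 1:] ^ card A * charpoly_on (A <+> B) M =
    [:0, 1:] ^ card B *
      (charpoly_on A (\<lambda>a a'. \<Sum>b\<in>B. M (Inl a) (Inr b) * M (Inr b) (Inl a')) \<circ>\<^sub>p [:0, 0, 1:])"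
proof -
  define l r where "l = card A" and "r = card B"
  obtain f g where f: "bij_betw f {0..<l} A" and g: "bij_betw g {0..<r} B"
    unfolding l_def r_def using ex_bij_betw_nat_finite assms(1,2) by metis
  define P where "P = mat l r (\<lambda>(i, j). M (Inl (f i)) (Inr (g j)))"
  define Q where "Q = mat r l (\<lambda>(i, j). M (Inr (g i)) (Inl (f j)))"
  have "charpoly_on (A <+> B) M = char_poly (four_block_mat (0\<^sub>m l l) P Q (0\<^sub>m r r))"
    unfolding charpoly_on_eq_char_poly[OF bij_betw_Plus_enum[OF f g]]
    by (intro arg_cong[where f = char_poly] eq_matI) (auto simp: P_def Q_def assms(3,4))
  moreover have "charpoly_on A (\<lambda>a a'. \<Sum>b\<in>B. M (Inl a) (Inr b) * M (Inr b) (Inl a')) =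
      char_poly (P * Q)"
    unfolding charpoly_on_eq_char_poly[OF f]
    by (intro arg_cong[where f = char_poly] eq_matI)
      (auto simp: P_def Q_def scalar_prod_def sum.reindex_bij_betw[OF g, symmetric])
  ultimately show ?thesis
    using char_poly_bipartite_block[of P l r Q] by (simp add: l_def r_def P_def Q_def)
qed

section \<open>Stochastic Gram matrices\<close>

lemma eigenvectorE:
  assumes "A \<in> carrier_mat n n" and "eigenvalue A a"
  obtains v where "v \<in> carrier_vec n" "v \<noteq> 0\<^sub>v n"
    "\<And>i. i < n \<Longrightarrow> (\<Sum>j<n. A $$ (i, j) * v $ j) = a * v $ i"
proof -
  obtain v where v: "v \<in> carrier_vec n" "v \<noteq> 0\<^sub>v n" "A *\<^sub>v v = a \<cdot>\<^sub>v v"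
    using assms unfolding eigenvalue_def eigenvector_def by auto
  have "(\<Sum>j<n. A $$ (i, j) * v $ j) = a * v $ i" if "i < n" for i
    using arg_cong[OF v(3), of "\<lambda>w. w $ i"] that assms(1) v(1)
    by (simp add: scalar_prod_def atLeast0LessThan)
  with v show ?thesis using that by blast
qed

lemma eigenvalue_gram_real_nonneg:
  fixes B :: "real mat"
  assumes B: "B \<in> carrier_mat n k"
    and "eigenvalue (map_mat complex_of_real (B * transpose_mat B)) a"
  shows "\<exists>\<mu>\<ge>0. a = complex_of_real \<mu>"
proof -
  let ?M = "map_mat complex_of_real (B * transpose_mat B)"
  obtain v where v: "v \<in> carrier_vec n" "v \<noteq> 0\<^sub>v n"
    and Mv: "\<And>i. i < n \<Longrightarrow> (\<Sum>j<n. ?M $$ (i, j) * v $ j) = a * v $ i"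
    using eigenvectorE[of ?M n a] assms by auto
  \<comment> \<open>Rayleigh quotient: \<open>v\<^sup>* (B B\<^sup>T) v\<close> equals both \<open>a |v|\<^sup>2 = a N\<close> and \<open>|B\<^sup>T v|\<^sup>2 = W\<close>.\<close>
  define w where "w k' = (\<Sum>j<n. complex_of_real (B $$ (j, k')) * v $ j)" for k'
  define N where "N = (\<Sum>i<n. (cmod (v $ i))\<^sup>2)"
  define W where "W = (\<Sum>k'<k. (cmod (w k'))\<^sup>2)"
  have "N \<noteq> 0"
  proof
    assume "N = 0"
    then have "v $ i = 0" if "i < n" for i
      using that by (simp add: N_def sum_nonneg_eq_0_iff)
    then show False using v by (auto intro!: eq_vecI)
  qed
  have "(\<Sum>i<n. cnj (v $ i) * (\<Sum>j<n. ?M $$ (i, j) * v $ j)) = (\<Sum>i<n. cnj (v $ i) * (a * v $ i))"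
    by (intro sum.cong refl) (simp add: Mv)
  also have "\<dots> = a * complex_of_real N"
    by (simp add: N_def sum_distrib_left complex_norm_square mult_ac del: of_real_power)
  moreover have "(\<Sum>i<n. cnj (v $ i) * (\<Sum>j<n. ?M $$ (i, j) * v $ j)) = complex_of_real W"
  proof -
    have "(\<Sum>i<n. cnj (v $ i) * (\<Sum>j<n. ?M $$ (i, j) * v $ j)) =
        (\<Sum>i<n. \<Sum>j<n. \<Sum>k'<k. cnj (v $ i) * B $$ (i, k') * (B $$ (j, k') * v $ j))"
      using B by (intro sum.cong refl)
        (simp add: scalar_prod_def atLeast0LessThan sum_distrib_left sum_distrib_right mult_ac)
    also have "\<dots> = (\<Sum>k'<k. cnj (w k') * w k')"
      by (simp add: w_def sum_product sum_distrib_left cnj_sum mult_ac sum.swap[of _ "{..<k}"])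
    finally show ?thesis
      by (simp add: W_def complex_norm_square mult.commute del: of_real_power)
  qed
  ultimately have "a = complex_of_real (W / N)"
    using \<open>N \<noteq> 0\<close> by (simp add: field_simps)
  moreover have "0 \<le> W / N"
    by (simp add: W_def N_def sum_nonneg)
  ultimately show ?thesis by blast
qed

lemma eigenvalue_stochastic_norm_le_1:
  fixes M :: "real mat"
  assumes M: "M \<in> carrier_mat n n" and nonneg: "\<And>i j. i < n \<Longrightarrow> j < n \<Longrightarrow> 0 \<le> M $$ (i, j)"
    and rows: "\<And>i. i < n \<Longrightarrow> (\<Sum>j<n. M $$ (i, j)) = 1"
    and "eigenvalue (map_mat complex_of_real M) a"
  shows "cmod a \<le> 1"
proof -
  obtain v where v: "v \<in> carrier_vec n" "v \<noteq> 0\<^sub>v n"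
    and Mv: "\<And>i. i < n \<Longrightarrow> (\<Sum>j<n. complex_of_real (M $$ (i, j)) * v $ j) = a * v $ i"
    using eigenvectorE[of "map_mat complex_of_real M" n a] assms by auto
  define m where "m = Max ((\<lambda>j. cmod (v $ j)) ` {..<n})"
  have max: "cmod (v $ j) \<le> m" if "j < n" for j
    unfolding m_def using that by (intro Max_ge) auto
  have "n \<noteq> 0"
  proof
    assume "n = 0"
    then have "v = 0\<^sub>v n"
      using v(1) by (intro eq_vecI) auto
    with v(2) show False ..
  qed
  then have "m \<in> (\<lambda>j. cmod (v $ j)) ` {..<n}"
    unfolding m_def by (intro Max_in) auto
  have "m \<noteq> 0"
  proof
    assume "m = 0"
    then have "v = 0\<^sub>v n"
      using max v(1) by (intro eq_vecI) force+
    with v(2) show False ..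
  qed
  obtain i where i: "i < n" and "cmod (v $ i) = m"
    using \<open>m \<in> (\<lambda>j. cmod (v $ j)) ` {..<n}\<close>
    by auto
  have "cmod a * cmod (v $ i) = cmod (\<Sum>j<n. complex_of_real (M $$ (i, j)) * v $ j)"
    by (simp add: Mv[OF i] norm_mult)
  also have "\<dots> \<le> (\<Sum>j<n. M $$ (i, j) * cmod (v $ i))"
    by (rule order_trans[OF norm_sum sum_mono])
      (simp add: norm_mult nonneg i max mult_left_mono \<open>cmod (v $ i) = m\<close>)
  also have "\<dots> = cmod (v $ i)"
    by (simp add: sum_distrib_right[symmetric] rows i)
  finally have "cmod a * m \<le> 1 * m"
    using \<open>cmod (v $ i) = m\<close> by simp
  moreover have "0 < m"
    using \<open>cmod (v $ i) = m\<close> \<open>m \<noteq> 0\<close> norm_ge_zero[of "v $ i"] by linarith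
  ultimately show ?thesis
    by (rule mult_right_le_imp_le)
qed

lemma eigenvalue_stochastic_one:
  fixes M :: "'a::field mat"
  assumes M: "M \<in> carrier_mat n n" and "n > 0" and rows: "\<And>i. i < n \<Longrightarrow> (\<Sum>j<n. M $$ (i, j)) = 1"
  shows "eigenvalue M 1"
proof -
  define u :: "'a vec" where "u = vec n (\<lambda>_. 1)"
  have "u $ 0 \<noteq> 0\<^sub>v n $ 0"
    using \<open>n > 0\<close> by (simp add: u_def)
  then have "u \<noteq> 0\<^sub>v n"
    by auto
  moreover have "M *\<^sub>v u = 1 \<cdot>\<^sub>v u"
    using M rows by (intro eq_vecI) (auto simp: u_def scalar_prod_def atLeast0LessThan)
  moreover have "u \<in> carrier_vec n"
    by (simp add: u_def)
  ultimately show ?thesis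
    using M unfolding eigenvalue_def eigenvector_def by blast
qed

lemma char_poly_real_roots:
  fixes M :: "real mat"
  assumes M: "M \<in> carrier_mat n n"
    and real: "\<And>a. eigenvalue (map_mat complex_of_real M) a \<Longrightarrow>
      \<exists>\<mu>. a = complex_of_real \<mu> \<and> P \<mu>"
  obtains mus where "char_poly M = (\<Prod>\<mu>\<leftarrow>mus. [:-\<mu>, 1:])" "length mus = n"
    "\<forall>\<mu>\<in>set mus. P \<mu>"
proof -
  interpret complex_poly: map_poly_inj_idom_hom complex_of_real ..
  have MC: "map_mat complex_of_real M \<in> carrier_mat n n"
    using M by simp
  obtain as where as: "char_poly (map_mat complex_of_real M) = (\<Prod>a\<leftarrow>as. [:-a, 1:])"
    and "length as = n"
    using char_poly_factorized[OF MC] by blast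
  have "\<exists>\<mu>. a = complex_of_real \<mu> \<and> P \<mu>" if "a \<in> set as" for a
  proof (rule real)
    have "poly (char_poly (map_mat complex_of_real M)) a = 0"
      unfolding as using that by (auto simp: poly_prod_list prod_list_zero_iff)
    then show "eigenvalue (map_mat complex_of_real M) a"
      using eigenvalue_root_char_poly[OF MC] by simp
  qed
  then have Re_as: "complex_of_real (Re a) = a \<and> P (Re a)" if "a \<in> set as" for a
    using that by fastforce
  define mus where "mus = map Re as"
  have mus: "as = map complex_of_real mus" "\<forall>\<mu>\<in>set mus. P \<mu>"
    using Re_as by (simp_all add: mus_def map_idI)
  have "map_poly complex_of_real (char_poly M) = char_poly (map_mat complex_of_real M)"
    by (rule of_real_hom.char_poly_hom[OF M, symmetric])
  also have "\<dots> = map_poly complex_of_real (\<Prod>\<mu>\<leftarrow>mus. [:-\<mu>, 1:])"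
    by (simp add: as mus complex_poly.hom_prod_list comp_def)
  finally have "char_poly M = (\<Prod>\<mu>\<leftarrow>mus. [:-\<mu>, 1:])"
    by (rule complex_poly.injectivity)
  then show ?thesis
    using that \<open>length as = n\<close> mus by simp
qed

lemma char_poly_stochastic_gram:
  fixes B :: "real mat"
  assumes B: "B \<in> carrier_mat n k" and "n > 0"
    and nonneg: "\<And>i j. i < n \<Longrightarrow> j < n \<Longrightarrow> 0 \<le> (B * transpose_mat B) $$ (i, j)"
    and rows: "\<And>i. i < n \<Longrightarrow> (\<Sum>j<n. (B * transpose_mat B) $$ (i, j)) = 1"
  obtains mus where "char_poly (B * transpose_mat B) = (\<Prod>\<mu>\<leftarrow>mus. [:-\<mu>, 1:])"
    "length mus = n" "\<forall>\<mu>\<in>set mus. 0 \<le> \<mu> \<and> \<mu> \<le> 1" "1 \<in> set mus"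
proof -
  have M: "B * transpose_mat B \<in> carrier_mat n n"
    using B by simp
  obtain mus where mus: "char_poly (B * transpose_mat B) = (\<Prod>\<mu>\<leftarrow>mus. [:-\<mu>, 1:])"
    "length mus = n" "\<forall>\<mu>\<in>set mus. 0 \<le> \<mu> \<and> \<mu> \<le> 1"
  proof (rule char_poly_real_roots[OF M])
    fix a assume a: "eigenvalue (map_mat complex_of_real (B * transpose_mat B)) a"
    then obtain \<mu> where "\<mu> \<ge> 0" "a = complex_of_real \<mu>"
      using eigenvalue_gram_real_nonneg[OF B] by blast
    moreover have "cmod a \<le> 1"
      using eigenvalue_stochastic_norm_le_1[OF M nonneg rows a] by simp
    ultimately show "\<exists>\<mu>. a = complex_of_real \<mu> \<and> 0 \<le> \<mu> \<and> \<mu> \<le> 1"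
      by auto
  qed
  have "poly (char_poly (B * transpose_mat B)) 1 = 0"
    using eigenvalue_stochastic_one[OF M \<open>n > 0\<close> rows] eigenvalue_root_char_poly[OF M] by simp
  then have "1 \<in> set mus"
    unfolding mus(1) by (auto simp: poly_prod_list prod_list_zero_iff)
  with mus that show ?thesis by blast
qed

section \<open>The two-step walk of a bipartite graph\<close>

lemma degree_Inl: "degree G (Inl a) = card {b \<in> rpart G. edge G a b}"
proof -
  have "{u \<in> verts G. adj G (Inl a) u} = Inr ` {b \<in> rpart G. edge G a b}"
    by (auto simp: verts_def elim: adj.elims)
  then show ?thesis
    by (simp add: degree_def card_image)
qed

lemma degree_Inr: "degree G (Inr b) = card {a \<in> lpart G. edge G a b}"
proof -
  have "{u \<in> verts G. adj G (Inr b) u} = Inl ` {a \<in> lpart G. edge G a b}"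
    by (auto simp: verts_def elim: adj.elims)
  then show ?thesis
    by (simp add: degree_def card_image)
qed

lemma degree_pos_if_connected:
  assumes "wf_bigraph G" and "lpart G \<noteq> {}" and "rpart G \<noteq> {}"
    and "connected_bigraph G" and v: "v \<in> verts G"
  shows "degree G v > 0"
proof -
  obtain w where w: "w \<in> verts G" "w \<noteq> v"
    using assms(2,3) v by (cases v) (auto simp: verts_def)
  have "(\<lambda>x y. x \<in> verts G \<and> y \<in> verts G \<and> adj G x y)\<^sup>*\<^sup>* v w"
    using assms(4) v w(1) unfolding connected_bigraph_def by blast
  then obtain u where "u \<in> verts G" "adj G v u"
    using w(2) by (cases rule: converse_rtranclpE) auto
  moreover have "finite (verts G)"
    using assms(1) by (simp add: wf_bigraph_def verts_def)
  ultimately show ?thesis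
    unfolding degree_def by (subst card_gt_0_iff) auto
qed

lemma connected_biregular_degrees:
  assumes "wf_bigraph G" and "lpart G \<noteq> {}" and "rpart G \<noteq> {}"
    and "connected_bigraph G" and "biregular G"
  obtains d where "\<And>a. a \<in> lpart G \<Longrightarrow> degree G (Inl a) = d" "d > 0"
    "\<And>b. b \<in> rpart G \<Longrightarrow> degree G (Inr b) > 0"
proof -
  obtain d where d: "\<forall>a\<in>lpart G. degree G (Inl a) = d"
    using assms(5) unfolding biregular_def by blast
  obtain a where "a \<in> lpart G"
    using assms(2) by blast
  then have "d > 0"
    using d degree_pos_if_connected[OF assms(1-4), of "Inl a"] by (auto simp: verts_def)
  moreover have "degree G (Inr b) > 0" if "b \<in> rpart G" for b
    using that degree_pos_if_connected[OF assms(1-4), of "Inr b"] by (auto simp: verts_def)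
  ultimately show ?thesis
    using that d by blast
qed

lemma sum_transition_Inl:
  assumes "finite (rpart G)" and "degree G (Inl a) > 0"
  shows "(\<Sum>b\<in>rpart G. transition G (Inl a) (Inr b)) = 1"
  using assms by (auto simp: transition_def degree_Inl sum.inter_filter[symmetric] card_gt_0_iff)

lemma sum_transition_Inr:
  assumes "finite (lpart G)" and "degree G (Inr b) > 0"
  shows "(\<Sum>a\<in>lpart G. transition G (Inr b) (Inl a)) = 1"
  using assms by (auto simp: transition_def degree_Inr sum.inter_filter[symmetric] card_gt_0_iff)

definition left_two_step :: "('a, 'b) bigraph \<Rightarrow> 'a \<Rightarrow> 'a \<Rightarrow> real" where
  "left_two_step G a a' = (\<Sum>b\<in>rpart G. transition G (Inl a) (Inr b) * transition G (Inr b) (Inl a'))"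

lemma sum_left_two_step:
  assumes "wf_bigraph G" and "degree G (Inl a) > 0" and "\<And>b. b \<in> rpart G \<Longrightarrow> degree G (Inr b) > 0"
  shows "(\<Sum>a'\<in>lpart G. left_two_step G a a') = 1"
proof -
  have fin: "finite (lpart G)" "finite (rpart G)"
    using assms(1) by (simp_all add: wf_bigraph_def)
  have "(\<Sum>a'\<in>lpart G. left_two_step G a a') =
      (\<Sum>b\<in>rpart G. transition G (Inl a) (Inr b) * (\<Sum>a'\<in>lpart G. transition G (Inr b) (Inl a')))"
    unfolding left_two_step_def by (simp add: sum_distrib_left sum.swap[of _ "lpart G"])
  also have "\<dots> = 1"
    using assms fin by (simp add: sum_transition_Inr sum_transition_Inl)
  finally show ?thesis .
qed

lemma charpoly_on_transition:
  assumes "wf_bigraph G"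
  shows "[:0, 1:] ^ card (lpart G) * charpoly_on (verts G) (transition G) =
    [:0, 1:] ^ card (rpart G) * (charpoly_on (lpart G) (left_two_step G) \<circ>\<^sub>p [:0, 0, 1:])"
  using assms unfolding verts_def left_two_step_def[abs_def] wf_bigraph_def
  by (intro charpoly_on_Plus_bipartite) (simp_all add: transition_def)

lemma left_two_step_spectrum:
  assumes wf: "wf_bigraph G" and "lpart G \<noteq> {}"
    and dL: "\<And>a. a \<in> lpart G \<Longrightarrow> degree G (Inl a) = d" and "d > 0"
    and dR: "\<And>b. b \<in> rpart G \<Longrightarrow> degree G (Inr b) > 0"
  obtains S where "charpoly_on (lpart G) (left_two_step G) = (\<Prod>\<mu>\<in>#S. [:-\<mu>, 1:])"
    "size S = card (lpart G)" "\<forall>\<mu>\<in>#S. 0 \<le> \<mu> \<and> \<mu> \<le> 1" "1 \<in># S"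
proof -
  define l r where "l = card (lpart G)" and "r = card (rpart G)"
  have fin: "finite (lpart G)" "finite (rpart G)"
    using wf by (simp_all add: wf_bigraph_def)
  obtain f g where f: "bij_betw f {0..<l} (lpart G)" and g: "bij_betw g {0..<r} (rpart G)"
    unfolding l_def r_def using ex_bij_betw_nat_finite fin by metis
  \<comment> \<open>\<open>B B\<^sup>T\<close> is the two-step walk; this factorization only needs the left part to be regular.\<close>
  define B where "B = mat l r (\<lambda>(i, k). if edge G (f i) (g k)
    then 1 / sqrt (d * degree G (Inr (g k))) else 0)"
  have W: "B * transpose_mat B = mat l l (\<lambda>(i, j). left_two_step G (f i) (f j))"
  proof (rule eq_matI)
    fix i j assume "i < dim_row (mat l l (\<lambda>(i, j). left_two_step G (f i) (f j)))"
      "j < dim_col (mat l l (\<lambda>(i, j). left_two_step G (f i) (f j)))"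
    then have ij: "f i \<in> lpart G" "f j \<in> lpart G" "i < l" "j < l"
      using bij_betwE[OF f] by auto
    have "(B * transpose_mat B) $$ (i, j) = (\<Sum>k\<in>{0..<r}. B $$ (i, k) * B $$ (j, k))"
      using ij by (simp add: B_def scalar_prod_def)
    also have "\<dots> = left_two_step G (f i) (f j)"
      unfolding left_two_step_def sum.reindex_bij_betw[OF g, symmetric]
      using ij bij_betwE[OF g] dL[of "f i"] \<open>d > 0\<close>
      by (intro sum.cong refl) (auto simp: B_def transition_def)
    finally show "(B * transpose_mat B) $$ (i, j) = mat l l (\<lambda>(i, j). left_two_step G (f i) (f j)) $$ (i, j)"
      using ij by simp
  qed (simp_all add: B_def)
  obtain mus where mus: "char_poly (B * transpose_mat B) = (\<Prod>\<mu>\<leftarrow>mus. [:-\<mu>, 1:])"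
    "length mus = l" "\<forall>\<mu>\<in>set mus. 0 \<le> \<mu> \<and> \<mu> \<le> 1" "1 \<in> set mus"
  proof (rule char_poly_stochastic_gram)
    show "B \<in> carrier_mat l r" by (simp add: B_def)
    show "0 < l" using \<open>lpart G \<noteq> {}\<close> fin by (simp add: l_def card_gt_0_iff)
    show "0 \<le> (B * transpose_mat B) $$ (i, j)" if "i < l" "j < l" for i j
      using that by (simp add: W left_two_step_def transition_def sum_nonneg)
    show "(\<Sum>j<l. (B * transpose_mat B) $$ (i, j)) = 1" if "i < l" for i
    proof -
      have "(\<Sum>j<l. (B * transpose_mat B) $$ (i, j)) = (\<Sum>a'\<in>lpart G. left_two_step G (f i) a')"
        using that by (simp add: W lessThan_atLeast0 sum.reindex_bij_betw[OF f, symmetric])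
      also have "\<dots> = 1"
        using that bij_betwE[OF f] wf dL \<open>d > 0\<close> dR by (intro sum_left_two_step) auto
      finally show ?thesis .
    qed
  qed
  show ?thesis
  proof (rule that[of "mset mus"])
    show "charpoly_on (lpart G) (left_two_step G) = (\<Prod>\<mu>\<in>#mset mus. [:-\<mu>, 1:])"
      using mus(1) by (simp add: charpoly_on_eq_char_poly[OF f] W[symmetric] prod_mset_prod_list flip: mset_map)
  qed (use mus in \<open>simp_all add: l_def\<close>)
qed

lemma lpart_partite_product [simp]: "lpart (partite_product G1 G2) = lpart G1 \<times> lpart G2"
  and rpart_partite_product [simp]: "rpart (partite_product G1 G2) = rpart G1 \<times> rpart G2"
  by (simp_all add: partite_product_def)

lemma wf_partite_product: "wf_bigraph G1 \<Longrightarrow> wf_bigraph G2 \<Longrightarrow> wf_bigraph (partite_product G1 G2)"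
  by (auto simp: wf_bigraph_def partite_product_def)

lemma degree_partite_product:
  "degree (partite_product G1 G2) (Inl (a1, a2)) = degree G1 (Inl a1) * degree G2 (Inl a2)"
  "degree (partite_product G1 G2) (Inr (b1, b2)) = degree G1 (Inr b1) * degree G2 (Inr b2)"
proof -
  have "{b \<in> rpart (partite_product G1 G2). edge (partite_product G1 G2) (a1, a2) b} =
      {b1 \<in> rpart G1. edge G1 a1 b1} \<times> {b2 \<in> rpart G2. edge G2 a2 b2}"
    "{a \<in> lpart (partite_product G1 G2). edge (partite_product G1 G2) a (b1, b2)} =
      {a1 \<in> lpart G1. edge G1 a1 b1} \<times> {a2 \<in> lpart G2. edge G2 a2 b2}"
    by (auto simp: partite_product_def)
  then show "degree (partite_product G1 G2) (Inl (a1, a2)) = degree G1 (Inl a1) * degree G2 (Inl a2)"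
    "degree (partite_product G1 G2) (Inr (b1, b2)) = degree G1 (Inr b1) * degree G2 (Inr b2)"
    by (simp_all add: degree_Inl degree_Inr card_cartesian_product)
qed

lemma transition_partite_product:
  "transition (partite_product G1 G2) (Inl (a1, a2)) (Inr (b1, b2)) =
    transition G1 (Inl a1) (Inr b1) * transition G2 (Inl a2) (Inr b2)"
  "transition (partite_product G1 G2) (Inr (b1, b2)) (Inl (a1, a2)) =
    transition G1 (Inr b1) (Inl a1) * transition G2 (Inr b2) (Inl a2)"
  by (simp_all add: transition_def degree_partite_product) (simp_all add: partite_product_def)

lemma left_two_step_partite_product:
  "left_two_step (partite_product G1 G2) (a1, a2) (a1', a2') =
    left_two_step G1 a1 a1' * left_two_step G2 a2 a2'"
  unfolding left_two_step_def rpart_partite_product sum_product sum.cartesian_product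
  by (intro sum.cong) (auto simp: transition_partite_product)

section \<open>The second largest eigenvalue\<close>

lemma sorted_list_of_multiset_Max:
  assumes "Z \<noteq> {#}"
  shows "sorted_list_of_multiset Z =
    sorted_list_of_multiset (Z - {#Max_mset Z#}) @ [Max_mset Z]"
proof -
  have "Max_mset Z \<in># Z"
    using assms by simp
  then have "Z = add_mset (Max_mset Z) (Z - {#Max_mset Z#})"
    by simp
  also have "sorted_list_of_multiset \<dots> =
      insort (Max_mset Z) (sorted_list_of_multiset (Z - {#Max_mset Z#}))"
    by (rule sorted_list_of_multiset_insert)
  also have "\<dots> = sorted_list_of_multiset (Z - {#Max_mset Z#}) @ [Max_mset Z]"
    by (rule sorted_insort_is_snoc) (auto dest: in_diffD)
  finally show ?thesis .
qed

lemma second_sorted_list_of_multiset: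
  assumes "2 \<le> size Z"
  shows "rev (sorted_list_of_multiset Z) ! 1 = Max (set_mset (Z - {#Max_mset Z#}))"
proof -
  define Z' where "Z' = Z - {#Max_mset Z#}"
  have "Z \<noteq> {#}"
    using assms by auto
  then have "size Z' = size Z - 1"
    by (simp add: Z'_def size_Diff_singleton)
  then have "Z' \<noteq> {#}"
    using assms by auto
  then show ?thesis
    using \<open>Z \<noteq> {#}\<close> sorted_list_of_multiset_Max[of Z] sorted_list_of_multiset_Max[of Z']
    by (simp add: Z'_def[symmetric] nth_append)
qed

definition signed_sqrts :: "real multiset \<Rightarrow> real multiset" where
  "signed_sqrts S = (\<Sum>\<mu>\<in>#S. {#sqrt \<mu>, - sqrt \<mu>#})"

lemma signed_sqrts_empty [simp]: "signed_sqrts {#} = {#}"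
  and signed_sqrts_add_mset [simp]:
    "signed_sqrts (add_mset \<mu> S) = add_mset (sqrt \<mu>) (add_mset (- sqrt \<mu>) (signed_sqrts S))"
  by (simp_all add: signed_sqrts_def)

lemma set_mset_signed_sqrts:
  "set_mset (signed_sqrts S) = sqrt ` set_mset S \<union> (\<lambda>\<mu>. - sqrt \<mu>) ` set_mset S"
  by (induction S) auto

lemma count_signed_sqrts_0: "count (signed_sqrts S) 0 = 2 * count S 0"
  by (induction S) auto

lemma size_signed_sqrts: "size (signed_sqrts S) = 2 * size S"
  by (induction S) auto

text \<open>
  Below, \<open>Z\<close> is the spectrum of the transition matrix and \<open>S\<close> that of the two-step walk, each
  with one eigenvalue 1 removed. The case \<open>l = r = 1\<close> is the single edge, the only one in which
  no eigenvalue \<open>\<ge> 0\<close> is left.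
\<close>

lemma Max_mset_bipartite_spectrum:
  assumes eq: "replicate_mset l 0 + Z = replicate_mset r 0 + add_mset (-1) (signed_sqrts S)"
    and size: "size S + 1 = l" and nonneg: "\<forall>\<mu>\<in>#S. 0 \<le> \<mu>" and "0 < r"
  shows "Max_mset Z = (if l = 1 \<and> r = 1 then -1 else sqrt (Max (insert 0 (set_mset S))))"
proof (cases "l = 1 \<and> r = 1")
  case True
  then have "Z = {#-1#}"
    using eq size by simp
  then show ?thesis
    using True by simp
next
  case False
  define m where "m = Max (insert 0 (set_mset S))"
  have "m \<in> insert 0 (set_mset S)"
    unfolding m_def by (intro Max_in) auto
  have le_m: "\<And>\<mu>. \<mu> \<in># S \<Longrightarrow> \<mu> \<le> m" and "0 \<le> m"
    by (simp_all add: m_def)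
  have "count Z z = count (add_mset (-1) (signed_sqrts S)) z" if "z \<noteq> 0" for z
    using arg_cong[OF eq, of "\<lambda>M. count M z"] that by simp
  then have mem: "z \<in># Z \<longleftrightarrow> z \<in># add_mset (-1) (signed_sqrts S)" if "z \<noteq> 0" for z
    using that by (metis count_greater_zero_iff)
  have count_0: "count Z 0 + l = r + 2 * count S 0"
    using arg_cong[OF eq, of "\<lambda>M. count M 0"] by (simp add: count_signed_sqrts_0)
  have "sqrt m \<in># Z"
  proof (cases "m = 0")
    case True
    then have "set_mset S \<subseteq> {0}"
      using le_m nonneg by force
    then have "count S 0 = size S"
      by (metis count_replicate_mset set_mset_subset_singletonD)
    then have "count Z 0 > 0"
      using count_0 size False \<open>0 < r\<close> by linarith
    then show ?thesis
      using True by simp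
  next
    case False
    then have "m \<in># S" and "sqrt m \<noteq> 0"
      using \<open>m \<in> insert 0 (set_mset S)\<close> \<open>0 \<le> m\<close> by auto
    then show ?thesis
      using mem by (simp add: set_mset_signed_sqrts)
  qed
  moreover have "z \<le> sqrt m" if "z \<in># Z" for z
  proof (cases "z = 0")
    case False
    then have "z = -1 \<or> (\<exists>\<mu>\<in>#S. z = sqrt \<mu> \<or> z = - sqrt \<mu>)"
      using mem that by (auto simp: set_mset_signed_sqrts)
    then show ?thesis
      using le_m nonneg \<open>0 \<le> m\<close> by (auto intro: real_sqrt_le_mono order_trans[of _ 0])
  qed (simp add: \<open>0 \<le> m\<close>)
  ultimately have "Max_mset Z = sqrt m"
    by (intro Max_eqI) auto
  with False show ?thesis
    by (auto simp: m_def)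
qed

definition nontrivial_max :: "real multiset \<Rightarrow> real" where
  "nontrivial_max S = Max (insert 0 (set_mset (S - {#1#})))"

lemma nontrivial_max_nonneg: "0 \<le> nontrivial_max S"
  by (simp add: nontrivial_max_def)

lemma nontrivial_max_size_1:
  assumes "size S = 1" and "1 \<in># S"
  shows "nontrivial_max S = 0"
proof -
  obtain a where "S = {#a#}"
    using size_1_singleton_mset[OF assms(1)] by blast
  with assms(2) show ?thesis
    by (simp add: nontrivial_max_def)
qed

lemma nontrivial_max_times_mset:
  assumes "1 \<in># M" and "1 \<in># N"
    and M: "\<forall>\<mu>\<in>#M. 0 \<le> \<mu> \<and> \<mu> \<le> 1" and N: "\<forall>\<nu>\<in>#N. 0 \<le> \<nu> \<and> \<nu> \<le> 1"
  shows "nontrivial_max (times_mset M N) = max (nontrivial_max M) (nontrivial_max N)"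
proof -
  define M' N' where "M' = M - {#1#}" and "N' = N - {#1#}"
  have MN: "M = add_mset 1 M'" "N = add_mset 1 N'"
    using assms(1,2) by (simp_all add: M'_def N'_def)
  define A B where "A = insert 0 (set_mset M')" and "B = insert 0 (set_mset N')"
  have "nontrivial_max (times_mset M N) = Max (A \<union> B \<union> set_mset (times_mset M' N'))"
    by (simp add: nontrivial_max_def MN times_mset_add_mset_one A_def B_def Un_ac)
  also have "\<dots> = max (Max A) (Max B)"
  proof (rule antisym)
    have "a * b \<le> Max A" if "a \<in># M'" "b \<in># N'" for a b
    proof -
      have "a * b \<le> a"
        using that M N by (simp add: MN mult_left_le)
      also have "\<dots> \<le> Max A"
        using that by (simp add: A_def)
      finally show ?thesis .
    qed
    then have "x \<le> Max A" if "x \<in># times_mset M' N'" for x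
      using that by (auto simp: set_mset_times_mset)
    moreover have "finite A" "finite B" "0 \<in> A"
      by (simp_all add: A_def B_def)
    ultimately have "x \<le> max (Max A) (Max B)" if "x \<in> A \<union> B \<union> set_mset (times_mset M' N')" for x
      using that by (auto intro: max.coboundedI1 max.coboundedI2 Max_ge)
    then show "Max (A \<union> B \<union> set_mset (times_mset M' N')) \<le> max (Max A) (Max B)"
      using \<open>finite A\<close> \<open>finite B\<close> \<open>0 \<in> A\<close> by (subst Max_le_iff) auto
    show "max (Max A) (Max B) \<le> Max (A \<union> B \<union> set_mset (times_mset M' N'))"
      by (simp add: A_def B_def Max_mono)
  qed
  finally show ?thesis
    by (simp add: nontrivial_max_def A_def B_def M'_def N'_def)
qed

lemma second_sorted_bipartite_spectrum:
  assumes eq: "replicate_mset l 0 + Z = replicate_mset r 0 + signed_sqrts S"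
    and size: "size S = l" and "1 \<in># S" and unit: "\<forall>\<mu>\<in>#S. 0 \<le> \<mu> \<and> \<mu> \<le> 1" and "0 < r"
  shows "rev (sorted_list_of_multiset Z) ! 1 =
    (if l = 1 \<and> r = 1 then -1 else sqrt (nontrivial_max S))"
proof -
  define S' where "S' = S - {#1#}"
  have S: "S = add_mset 1 S'"
    using \<open>1 \<in># S\<close> by (simp add: S'_def)
  have "count Z 1 = count (replicate_mset r 0 + signed_sqrts S) 1"
    using arg_cong[OF eq, of "\<lambda>M. count M 1"] by simp
  then have "1 \<in># Z"
    by (simp add: S flip: count_greater_zero_iff)
  define Z' where "Z' = Z - {#1#}"
  have Z: "Z = add_mset 1 Z'"
    using \<open>1 \<in># Z\<close> by (simp add: Z'_def)
  have "size Z = l + r"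
    using arg_cong[OF eq, of size] size by (simp add: size_signed_sqrts)
  moreover have "Max_mset Z = 1"
  proof (rule Max_eqI)
    fix z assume "z \<in> set_mset Z"
    then have "z \<in># replicate_mset r 0 + signed_sqrts S"
      using eq by (metis union_iff)
    then consider "z = 0" | \<mu> where "\<mu> \<in># S" "z = sqrt \<mu> \<or> z = - sqrt \<mu>"
      by (auto simp: set_mset_signed_sqrts split: if_splits)
    then show "z \<le> 1"
    proof cases
      case 2
      then have "0 \<le> sqrt \<mu>" "sqrt \<mu> \<le> 1"
        using unit by auto
      with 2 show ?thesis by linarith
    qed simp
  qed (use \<open>1 \<in># Z\<close> in simp_all)
  moreover have "replicate_mset l 0 + Z' = replicate_mset r 0 + add_mset (-1) (signed_sqrts S')"
    using eq by (simp add: S Z)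
  ultimately show ?thesis
    using second_sorted_list_of_multiset[of Z] Max_mset_bipartite_spectrum[of l Z' r S'] size unit \<open>0 < r\<close>
    by (simp add: S nontrivial_max_def Z'_def[symmetric])
qed

lemma prod_mset_linear_nonzero: "(\<Prod>\<mu>\<in>#S. [:-\<mu>, 1::'a::idom:]) \<noteq> 0"
  by (auto simp: prod_mset_zero_iff image_iff)

lemma degree_prod_mset_linear: "Polynomial.degree (\<Prod>\<mu>\<in>#S. [:-\<mu>, 1::'a::idom:]) = size S"
proof (induction S)
  case (add \<mu> S)
  have "Polynomial.degree ([:-\<mu>, 1:] * (\<Prod>\<mu>\<in>#S. [:-\<mu>, 1::'a:])) = Suc (size S)"
    using prod_mset_linear_nonzero[of S]
    by (subst degree_mult_eq) (simp_all add: add.IH del: mult_pCons_left prod_mset_zero_iff)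
  then show ?case
    by simp
qed simp

lemma proots_X_power_mult:
  assumes "p \<noteq> 0"
  shows "proots ([:0, 1:] ^ n * p :: 'a::idom poly) = replicate_mset n 0 + proots p"
  using assms by (simp add: proots_mult proots_power)

lemma proots_prod_mset_pcompose_square:
  assumes "\<forall>\<mu>\<in>#S. 0 \<le> \<mu>"
  shows "proots ((\<Prod>\<mu>\<in>#S. [:-\<mu>, 1:]) \<circ>\<^sub>p [:0, 0, 1:]) = signed_sqrts S"
  using assms
proof (induction S)
  case (add \<mu> S)
  let ?Q = "(\<Prod>\<mu>\<in>#S. [:-\<mu>, 1:]) \<circ>\<^sub>p [:0, 0, 1:]"
  have "[:-\<mu>, 1:] \<circ>\<^sub>p [:0, 0, 1:] = [:- sqrt \<mu>, 1:] * [:sqrt \<mu>, 1:]"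
    using add.prems by (simp add: pcompose_pCons)
  then have "(\<Prod>\<mu>\<in>#add_mset \<mu> S. [:-\<mu>, 1:]) \<circ>\<^sub>p [:0, 0, 1:] =
      [:- sqrt \<mu>, 1:] * ([:sqrt \<mu>, 1:] * ?Q)"
    by (simp only: image_mset_add_mset prod_mset.add_mset pcompose_mult mult.assoc)
  moreover have "?Q \<noteq> 0"
    using prod_mset_linear_nonzero[of S] by (simp add: pcompose_eq_0_iff del: prod_mset_zero_iff)
  ultimately show ?case
    using add by (simp add: proots_mult del: mult_pCons_left)
qed (simp add: pcompose_1)

lemma lambda2_eq_nontrivial_max:
  assumes wf: "wf_bigraph G" and "rpart G \<noteq> {}"
    and S: "charpoly_on (lpart G) (left_two_step G) = (\<Prod>\<mu>\<in>#S. [:-\<mu>, 1:])"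
    and unit: "\<forall>\<mu>\<in>#S. 0 \<le> \<mu> \<and> \<mu> \<le> 1" and "1 \<in># S"
  shows "lambda2 G =
    (if card (lpart G) = 1 \<and> card (rpart G) = 1 then -1 else sqrt (nontrivial_max S))"
proof -
  have fin: "finite (lpart G)" "finite (rpart G)" "finite (verts G)"
    using wf by (simp_all add: wf_bigraph_def verts_def)
  have "size S = card (lpart G)"
    using monic_charpoly_on(1)[OF fin(1), of "left_two_step G"] by (simp add: S degree_prod_mset_linear)
  have "charpoly_on (verts G) (transition G) \<noteq> 0"
    using monic_charpoly_on(2)[OF fin(3), of "transition G"] by auto
  then have "replicate_mset (card (lpart G)) 0 + proots (charpoly_on (verts G) (transition G)) =
      proots ([:0, 1:] ^ card (lpart G) * charpoly_on (verts G) (transition G))"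
    by (rule proots_X_power_mult[symmetric])
  also have "\<dots> = proots ([:0, 1:] ^ card (rpart G) * ((\<Prod>\<mu>\<in>#S. [:-\<mu>, 1:]) \<circ>\<^sub>p [:0, 0, 1:]))"
    by (simp only: charpoly_on_transition[OF wf] S)
  also have "\<dots> = replicate_mset (card (rpart G)) 0 + signed_sqrts S"
    using prod_mset_linear_nonzero[of S] unit
    by (simp add: proots_X_power_mult pcompose_eq_0_iff proots_prod_mset_pcompose_square
        del: prod_mset_zero_iff)
  finally have "replicate_mset (card (lpart G)) 0 + proots (charpoly_on (verts G) (transition G)) =
      replicate_mset (card (rpart G)) 0 + signed_sqrts S" .
  moreover have "0 < card (rpart G)"
    using \<open>rpart G \<noteq> {}\<close> fin(2) by (simp add: card_gt_0_iff)
  ultimately show ?thesis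
    unfolding lambda2_def eigenvalues_desc_def
    by (rule second_sorted_bipartite_spectrum[OF _ \<open>size S = card (lpart G)\<close> \<open>1 \<in># S\<close> unit])
qed

lemma lambda2_connected_biregular:
  assumes "wf_bigraph G" and "lpart G \<noteq> {}" and "rpart G \<noteq> {}"
    and "connected_bigraph G" and "biregular G"
  obtains S where "charpoly_on (lpart G) (left_two_step G) = (\<Prod>\<mu>\<in>#S. [:-\<mu>, 1:])"
    "\<forall>\<mu>\<in>#S. 0 \<le> \<mu> \<and> \<mu> \<le> 1" "1 \<in># S" "size S = card (lpart G)"
    "lambda2 G =
      (if card (lpart G) = 1 \<and> card (rpart G) = 1 then -1 else sqrt (nontrivial_max S))"
proof -
  obtain d where "\<And>a. a \<in> lpart G \<Longrightarrow> degree G (Inl a) = d" "d > 0"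
    "\<And>b. b \<in> rpart G \<Longrightarrow> degree G (Inr b) > 0"
    using connected_biregular_degrees[OF assms] by blast
  then obtain S where S: "charpoly_on (lpart G) (left_two_step G) = (\<Prod>\<mu>\<in>#S. [:-\<mu>, 1:])"
    "size S = card (lpart G)" "\<forall>\<mu>\<in>#S. 0 \<le> \<mu> \<and> \<mu> \<le> 1" "1 \<in># S"
    using left_two_step_spectrum[OF assms(1,2)] by metis
  then show ?thesis
    using that lambda2_eq_nontrivial_max[OF assms(1,3) S(1,3,4)] by blast
qed

lemma lambda2_partite_product:
  assumes "wf_bigraph G1" and "wf_bigraph G2" and "rpart G1 \<noteq> {}" and "rpart G2 \<noteq> {}"
    and S1: "charpoly_on (lpart G1) (left_two_step G1) = (\<Prod>\<mu>\<in>#S1. [:-\<mu>, 1:])"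
      "\<forall>\<mu>\<in>#S1. 0 \<le> \<mu> \<and> \<mu> \<le> 1" "1 \<in># S1"
    and S2: "charpoly_on (lpart G2) (left_two_step G2) = (\<Prod>\<mu>\<in>#S2. [:-\<mu>, 1:])"
      "\<forall>\<mu>\<in>#S2. 0 \<le> \<mu> \<and> \<mu> \<le> 1" "1 \<in># S2"
  shows "lambda2 (partite_product G1 G2) =
    (if card (lpart G1) * card (lpart G2) = 1 \<and> card (rpart G1) * card (rpart G2) = 1 then -1
     else max (sqrt (nontrivial_max S1)) (sqrt (nontrivial_max S2)))"
proof -
  have "left_two_step (partite_product G1 G2) =
      (\<lambda>(a1, a2) (a1', a2'). left_two_step G1 a1 a1' * left_two_step G2 a2 a2')"
    by (auto simp: fun_eq_iff left_two_step_partite_product)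
  then have "charpoly_on (lpart (partite_product G1 G2)) (left_two_step (partite_product G1 G2)) =
      (\<Prod>\<mu>\<in>#times_mset S1 S2. [:-\<mu>, 1:])"
    using charpoly_on_tensor[OF _ _ S1(1) S2(1)] assms(1,2) by (simp add: wf_bigraph_def)
  moreover have "sqrt (max x y) = max (sqrt x) (sqrt y)" for x y
    by (simp add: max_def)
  ultimately show ?thesis
    using lambda2_eq_nontrivial_max[OF wf_partite_product[OF assms(1,2)]] assms(3,4)
      times_mset_unit_interval[OF S1(2) S2(2)] one_in_times_mset[OF S1(3) S2(3)]
      nontrivial_max_times_mset[OF S1(3) S2(3) S1(2) S2(2)]
    by (simp add: card_cartesian_product)
qed

lemma max_single_edge_cases:
  fixes x1 x2 :: real and l1 l2 r1 r2 :: nat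
  assumes "0 \<le> x1" "0 \<le> x2" "l1 = 1 \<Longrightarrow> x1 = 0" "l2 = 1 \<Longrightarrow> x2 = 0"
    and "0 < l1" "0 < r1" "0 < l2" "0 < r2"
  shows "(if l1 * l2 = 1 \<and> r1 * r2 = 1 then -1 else max x1 x2) =
    max (if l1 = 1 \<and> r1 = 1 then -1 else x1) (if l2 = 1 \<and> r2 = 1 then -1 else x2)"
  using assms by (auto simp: max_def)

theorem mainTheorem3:
  fixes G1 :: "('a, 'b) bigraph" and G2 :: "('c, 'd) bigraph"
  assumes "wf_bigraph G1" "wf_bigraph G2"
    and "lpart G1 \<noteq> {}" "rpart G1 \<noteq> {}" "lpart G2 \<noteq> {}" "rpart G2 \<noteq> {}"
    and "connected_bigraph G1" "connected_bigraph G2"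
    and "biregular G1" "biregular G2"
  shows "lambda2 (partite_product G1 G2) = max (lambda2 G1) (lambda2 G2)"
proof -
  obtain S1 where S1: "charpoly_on (lpart G1) (left_two_step G1) = (\<Prod>\<mu>\<in>#S1. [:-\<mu>, 1:])"
    "\<forall>\<mu>\<in>#S1. 0 \<le> \<mu> \<and> \<mu> \<le> 1" "1 \<in># S1" "size S1 = card (lpart G1)"
    "lambda2 G1 = (if card (lpart G1) = 1 \<and> card (rpart G1) = 1 then -1 else sqrt (nontrivial_max S1))"
    using lambda2_connected_biregular[OF assms(1,3,4,7,9)] .
  obtain S2 where S2: "charpoly_on (lpart G2) (left_two_step G2) = (\<Prod>\<mu>\<in>#S2. [:-\<mu>, 1:])"
    "\<forall>\<mu>\<in>#S2. 0 \<le> \<mu> \<and> \<mu> \<le> 1" "1 \<in># S2" "size S2 = card (lpart G2)"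
    "lambda2 G2 = (if card (lpart G2) = 1 \<and> card (rpart G2) = 1 then -1 else sqrt (nontrivial_max S2))"
    using lambda2_connected_biregular[OF assms(2,5,6,8,10)] .
  have "lambda2 (partite_product G1 G2) =
      (if card (lpart G1) * card (lpart G2) = 1 \<and> card (rpart G1) * card (rpart G2) = 1 then -1
       else max (sqrt (nontrivial_max S1)) (sqrt (nontrivial_max S2)))"
    by (rule lambda2_partite_product[OF assms(1,2,4,6) S1(1-3) S2(1-3)])
  also have "\<dots> = max (lambda2 G1) (lambda2 G2)"
    unfolding S1(5) S2(5)
    using S1(3,4) S2(3,4) assms(1-6) nontrivial_max_nonneg[of S1] nontrivial_max_nonneg[of S2]
    by (intro max_single_edge_cases) (auto simp: nontrivial_max_size_1 wf_bigraph_def card_gt_0_iff)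
  finally show ?thesis .
qed

end
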